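(* Consider the three-link parallel network with unit demand and latencies $\ell_1(x_1)=x_1$, $\ell_2(x_2)=x_2$, $\ell_3(x_3)=\frac{x_3}{2}+\frac65$. Then every toll vector in the set $\left\{\left(t_1,\tfrac75-t_1,0\right)\ :\ \tfrac{24}{35}\le t_1\le\tfrac57\right\}$ is an uncapped subgame perfect Nash equilibrium; in particular $\mathcal{T}(\infty)$ contains infinitely many elements.
   Context: Flows $x\in\mathbb{R}^3_+$ with $x_1+x_2+x_3=1$. For tolls $t\in\mathbb{R}^3_+$, $x(t)$ is the unique Wardrop equilibrium for $t$ (for all $i,j$ with $x_i>0$: $\ell_i(x_i)+t_i\le\ell_j(x_j)+t_j$). Profit $\Pi_i(t)=t_ix_i(t)$. $\mathcal{T}(\infty)$: toll vectors $t\in\mathbb{R}^3_+$ such that for every $i$ and every $t'_i\ge0$, $\Pi_i(t_i,t_{-i})\ge\Pi_i(t'_i,t_{-i})$ (flow recomputed). Note that here the untolled Wardrop equilibrium does not have full support (link 3 is unused). *)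

theory Defs
  imports "HOL-Analysis.Analysis"
begin

text \<open>Three parallel links, indexed by the numeral type 3 (elements 1, 2, 3 where 3 = 0).
  Flows and tolls are vectors in real^3. Unit demand.\<close>

definition flows :: "(real^3) set" where
  "flows = {x. (\<forall>i. 0 \<le> x $ i) \<and> (\<Sum>i\<in>UNIV. x $ i) = 1}"

definition wardrop :: "(3 \<Rightarrow> real \<Rightarrow> real) \<Rightarrow> real^3 \<Rightarrow> real^3 \<Rightarrow> bool" where
  "wardrop l t x \<longleftrightarrow> x \<in> flows \<and>
     (\<forall>i j. 0 < x $ i \<longrightarrow> l i (x $ i) + t $ i \<le> l j (x $ j) + t $ j)"

definition eqflow :: "(3 \<Rightarrow> real \<Rightarrow> real) \<Rightarrow> real^3 \<Rightarrow> real^3" where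
  "eqflow l t = (THE x. wardrop l t x)"

definition profit :: "(3 \<Rightarrow> real \<Rightarrow> real) \<Rightarrow> 3 \<Rightarrow> real^3 \<Rightarrow> real" where
  "profit l i t = t $ i * eqflow l t $ i"

definition upd_toll :: "real^3 \<Rightarrow> 3 \<Rightarrow> real \<Rightarrow> real^3" where
  "upd_toll t i s = (\<chi> j. if j = i then s else t $ j)"

definition T_inf :: "(3 \<Rightarrow> real \<Rightarrow> real) \<Rightarrow> (real^3) set" where
  "T_inf l = {t. (\<forall>i. 0 \<le> t $ i) \<and>
     (\<forall>i s. 0 \<le> s \<longrightarrow> profit l i (upd_toll t i s) \<le> profit l i t)}"

definition lat :: "3 \<Rightarrow> real \<Rightarrow> real" where
  "lat i y = (if i = 1 then y else if i = 2 then y else y / 2 + 6 / 5)"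

end

theory Submission imports Defs begin

text \<open>If link 1 lowers or raises its toll to \<open>s\<close> while link 2 keeps charging \<open>b\<close> and link 3 stays
  free, the equilibrium flow on link 1 is an explicit piecewise linear function of \<open>s\<close>:
  link 3 is unused as long as \<open>s + b \<le> 7/5\<close>, and link 1 is priced out once
  \<open>s > (17/5 + b)/3\<close>. Its revenue \<open>s\<close> times this flow is concave on each piece, and on the middle
  piece the bound \<open>24/35 \<le> t\<^sub>1\<close> is exactly what keeps the revenue below its current value.\<close>

lemma exists_coordinate_less:
  fixes x y :: "real^'n"
  assumes "(\<Sum>i\<in>UNIV. x $ i) = (\<Sum>i\<in>UNIV. y $ i)" and "x \<noteq> y"
  obtains i where "y $ i < x $ i"
proof -
  have "\<exists>i. y $ i < x $ i"
  proof (rule ccontr)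
    assume "\<not> ?thesis"
    then have le: "\<forall>i\<in>UNIV. x $ i \<le> y $ i" by (simp add: not_less)
    from \<open>x \<noteq> y\<close> obtain k where "x $ k \<noteq> y $ k" by (auto simp: vec_eq_iff)
    with le have "\<exists>k\<in>UNIV. x $ k < y $ k" by (auto simp: order_less_le)
    with le have "(\<Sum>i\<in>UNIV. x $ i) < (\<Sum>i\<in>UNIV. y $ i)"
      by (intro sum_strict_mono_ex1) auto
    with assms(1) show False by simp
  qed
  with that show thesis by blast
qed

lemma wardrop_unique:
  assumes mono: "\<And>i. strict_mono (l i)"
    and x: "wardrop l t x" and y: "wardrop l t y"
  shows "x = y"
proof (rule ccontr)
  assume "x \<noteq> y"
  have sums: "(\<Sum>i\<in>UNIV. x $ i) = (\<Sum>i\<in>UNIV. y $ i)"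
    using x y by (simp add: wardrop_def flows_def)
  obtain i where i: "y $ i < x $ i" using exists_coordinate_less[OF sums \<open>x \<noteq> y\<close>] .
  obtain j where j: "x $ j < y $ j" using exists_coordinate_less[OF sums[symmetric]] \<open>x \<noteq> y\<close> by metis
  have "0 \<le> y $ i" "0 \<le> x $ j" using x y by (auto simp: wardrop_def flows_def)
  then have "0 < x $ i" "0 < y $ j" using i j by linarith+
  then have "l i (x $ i) + t $ i \<le> l j (x $ j) + t $ j"
    and "l j (y $ j) + t $ j \<le> l i (y $ i) + t $ i"
    using x y by (auto simp: wardrop_def)
  moreover have "l i (y $ i) < l i (x $ i)" "l j (x $ j) < l j (y $ j)"
    using i j mono by (auto dest: strict_monoD)
  ultimately show False by linarith
qed

lemma eqflow_eqI:
  assumes "\<And>i. strict_mono (l i)" and "wardrop l t x"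
  shows "eqflow l t = x"
  unfolding eqflow_def using assms wardrop_unique by blast

lemma strict_mono_lat: "strict_mono (lat i)"
  by (rule strict_monoI) (simp add: lat_def)

lemma wardrop_lat_iff:
  "wardrop lat t x \<longleftrightarrow>
    0 \<le> x$1 \<and> 0 \<le> x$2 \<and> 0 \<le> x$3 \<and> x$1 + x$2 + x$3 = 1 \<and>
    (0 < x$1 \<longrightarrow> x$1 + t$1 \<le> x$2 + t$2 \<and> x$1 + t$1 \<le> x$3/2 + 6/5 + t$3) \<and>
    (0 < x$2 \<longrightarrow> x$2 + t$2 \<le> x$1 + t$1 \<and> x$2 + t$2 \<le> x$3/2 + 6/5 + t$3) \<and>
    (0 < x$3 \<longrightarrow> x$3/2 + 6/5 + t$3 \<le> x$1 + t$1 \<and> x$3/2 + 6/5 + t$3 \<le> x$2 + t$2)"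
  unfolding wardrop_def flows_def forall_3 sum_3 by (auto simp: lat_def)

definition own_flow :: "real \<Rightarrow> real \<Rightarrow> real" where
  "own_flow b s =
    (if s \<le> 7/5 - b then (1 + b - s) / 2
     else if s \<le> (17/5 + b) / 3 then (17/5 + b - 3 * s) / 4
     else 0)"

definition third_flow :: "real \<Rightarrow> real \<Rightarrow> real" where
  "third_flow b s =
    (if s \<le> 7/5 - b then 0
     else if s \<le> (17/5 + b) / 3 then (s + b - 7/5) / 2
     else 2 * (b - 1/5) / 3)"

lemma eqflow_lat_own_flow:
  assumes ij: "i \<noteq> 3" "j \<noteq> 3" "i \<noteq> j"
    and T: "T $ i = s" "T $ j = b" "T $ 3 = 0"
    and s: "0 \<le> s" and b: "1/5 \<le> b" "b \<le> 1"
  shows "eqflow lat T $ i = own_flow b s"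
proof -
  define x :: "real^3" where
    "x = (\<chi> k. if k = i then own_flow b s
               else if k = 3 then third_flow b s
               else 1 - own_flow b s - third_flow b s)"
  have ij_cases: "i = 1 \<and> j = 2 \<or> i = 2 \<and> j = 1"
    using ij exhaust_3 by metis
  have "wardrop lat T x"
    using ij_cases
  proof
    assume "i = 1 \<and> j = 2"
    with T s b show ?thesis
      by (auto simp: wardrop_lat_iff x_def own_flow_def third_flow_def field_simps)
  next
    assume "i = 2 \<and> j = 1"
    with T s b show ?thesis
      by (auto simp: wardrop_lat_iff x_def own_flow_def third_flow_def field_simps)
  qed
  then show ?thesis
    by (simp add: eqflow_eqI[OF strict_mono_lat] x_def)
qed

lemma own_revenue_le:
  fixes a s :: real
  assumes a: "24/35 \<le> a" "a \<le> 5/7" and s: "0 \<le> s"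
  shows "s * own_flow (7/5 - a) s \<le> a * own_flow (7/5 - a) a"
proof -
  have at_a: "own_flow (7/5 - a) a = 6/5 - a"
    by (simp add: own_flow_def)
  consider (free) "s \<le> a" | (shared) "a < s" "s \<le> (24/5 - a) / 3" | (priced_out) "(24/5 - a) / 3 < s"
    by linarith
  then show ?thesis
  proof cases
    case free
    have "0 \<le> (a - s) * (12/5 - 2 * a - s)" using free a by (intro mult_nonneg_nonneg) linarith+
    with free show ?thesis
      unfolding at_a by (simp add: own_flow_def algebra_simps) (simp add: field_simps; linarith)
  next
    case shared
    \<comment> \<open>The second factor is at least \<open>7a - 24/5\<close>, nonnegative precisely because \<open>a \<ge> 24/35\<close>.\<close>
    have "0 \<le> (s - a) * (4 * a + 3 * s - 24/5)" using shared a by (intro mult_nonneg_nonneg) linarith+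
    with shared show ?thesis
      unfolding at_a by (simp add: own_flow_def algebra_simps) (simp add: field_simps; linarith)
  next
    case priced_out
    then show ?thesis using a by (simp add: own_flow_def)
  qed
qed

lemma profit_lat_symmetric_link:
  fixes t :: "real^3"
  assumes ij: "i \<noteq> 3" "j \<noteq> 3" "i \<noteq> j"
    and t: "t $ i + t $ j = 7/5" "24/35 \<le> t $ i" "t $ i \<le> 5/7" "t $ 3 = 0"
    and s: "0 \<le> s"
  shows "profit lat i (upd_toll t i s) \<le> profit lat i t"
proof -
  have "eqflow lat (upd_toll t i s) $ i = own_flow (7/5 - t $ i) s"
    using ij t s by (intro eqflow_lat_own_flow[where j = j]) (auto simp: upd_toll_def)
  moreover have "eqflow lat t $ i = own_flow (7/5 - t $ i) (t $ i)"
    using ij t by (intro eqflow_lat_own_flow[where j = j]) auto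
  ultimately show ?thesis
    using own_revenue_le[OF t(2,3) s] by (simp add: profit_def upd_toll_def)
qed

lemma profit_lat_third_link:
  fixes t1 s :: real
  assumes "24/35 \<le> t1" "t1 \<le> 5/7" "0 \<le> s"
  shows "profit lat 3 (upd_toll (vector [t1, 7/5 - t1, 0]) 3 s) = 0"
proof -
  have "wardrop lat (upd_toll (vector [t1, 7/5 - t1, 0]) 3 s) (vector [6/5 - t1, t1 - 1/5, 0])"
    using assms by (simp add: wardrop_lat_iff upd_toll_def)
  then show ?thesis
    by (simp add: profit_def eqflow_eqI[OF strict_mono_lat])
qed

lemma toll_vector_in_T_inf:
  fixes t1 :: real
  assumes "24/35 \<le> t1" "t1 \<le> 5/7"
  shows "vector [t1, 7/5 - t1, 0] \<in> T_inf lat"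
proof -
  let ?t = "vector [t1, 7/5 - t1, 0] :: real^3"
  have "profit lat i (upd_toll ?t i s) \<le> profit lat i ?t" if "0 \<le> s" for i s
  proof -
    consider "i = 1" | "i = 2" | "i = 3" using exhaust_3 by blast
    then show ?thesis
    proof cases
      case 1
      then show ?thesis using assms that by (intro profit_lat_symmetric_link[where j = 2]) auto
    next
      case 2
      then show ?thesis using assms that by (intro profit_lat_symmetric_link[where j = 1]) auto
    next
      case 3
      have "profit lat 3 ?t = 0" by (simp add: profit_def)
      with 3 show ?thesis using profit_lat_third_link[OF assms that] by simp
    qed
  qed
  moreover have "\<forall>i. 0 \<le> ?t $ i" unfolding forall_3 using assms by simp
  ultimately show ?thesis unfolding T_inf_def by blast
qed

theorem mainTheorem13:
  shows "(\<forall>t1::real. 24/35 \<le> t1 \<and> t1 \<le> 5/7 \<longrightarrow>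
            vector [t1, 7/5 - t1, 0] \<in> T_inf lat)
         \<and> infinite (T_inf lat)"
proof
  show family: "\<forall>t1::real. 24/35 \<le> t1 \<and> t1 \<le> 5/7 \<longrightarrow> vector [t1, 7/5 - t1, 0] \<in> T_inf lat"
    using toll_vector_in_T_inf by blast
  let ?f = "\<lambda>t1::real. vector [t1, 7/5 - t1, 0] :: real^3"
  have "inj_on ?f {24/35..5/7}"
    by (rule inj_onI) (metis vector_3(1))
  moreover have "infinite {24/35..5/7::real}" by (rule infinite_Icc) simp
  ultimately have "infinite (?f ` {24/35..5/7})" using finite_imageD by blast
  moreover have "?f ` {24/35..5/7} \<subseteq> T_inf lat" using family by auto
  ultimately show "infinite (T_inf lat)" using finite_subset by blast
qed

end
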